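(* Let $G$ be a looped simple graph and $k_1,k_2$ positive integers. The following are equivalent: (1) $G$ is locally equivalent to some looped simple graph $H$ having two distinct nonadjacent vertices of degrees $k_1-1$ and $k_2-1$ with no common neighbor; (2) some transverse matroid of $G$ has two disjoint circuits of sizes $k_1$ and $k_2$ whose union contains no other circuit.
   Context: A looped simple graph is a finite graph in which each vertex carries at most one loop and no two distinct vertices are joined by more than one edge. "Adjacent"/"neighbors" refer only to distinct vertices joined by a non-loop edge; the degree of a vertex is its number of neighbors (loops not counted). $A(G)$ is the $V(G)\times V(G)$ matrix over $GF(2)$ with diagonal entry $1$ exactly at looped vertices and off-diagonal entry $1$ exactly for adjacent pairs. $IAS(G)=(I\mid A(G)\mid A(G)+I)$ over $GF(2)$, rows indexed by $V(G)$; the $v$-columns of the three blocks are labelled $\phi_G(v),\chi_G(v),\psi_G(v)$. $M[IAS(G)]$ is the binary column matroid of $IAS(G)$ on $W(G)=\{\phi_G(v),\chi_G(v),\psi_G(v):v\in V(G)\}$. A transversal contains exactly one element of each vertex triple $\{\phi_G(v),\chi_G(v),\psi_G(v)\}$; a transverse matroid of $G$ is the restriction of $M[IAS(G)]$ to a transversal. Local equivalence: $G_\ell^v$ complements the loop status of $v$; $G_s^v$ complements the adjacency status of every pair of distinct neighbors of $v$; $G_{ns}^v$ does this and also complements the loop status of every neighbor of $v$. $H$ is locally equivalent to $G$ if obtained from $G$ by a finite sequence of such operations. *)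

theory Defs
  imports Main "HOL-Library.Z2"
begin

text \<open>A looped simple graph is represented by a finite vertex set V and a symmetric
  relation A on V: for distinct u, v, A u v means u and v are adjacent; A v v means
  v carries a loop.  So A is exactly the adjacency matrix A(G) over GF(2).\<close>

definition looped_simple_graph :: "'a set \<Rightarrow> ('a \<Rightarrow> 'a \<Rightarrow> bool) \<Rightarrow> bool" where
  "looped_simple_graph V A \<longleftrightarrow> finite V \<and> (\<forall>u v. A u v = A v u) \<and>
     (\<forall>u v. A u v \<longrightarrow> u \<in> V \<and> v \<in> V)"

definition adjacent :: "('a \<Rightarrow> 'a \<Rightarrow> bool) \<Rightarrow> 'a \<Rightarrow> 'a \<Rightarrow> bool" where
  "adjacent A u v \<longleftrightarrow> u \<noteq> v \<and> A u v"

definition degree :: "('a \<Rightarrow> 'a \<Rightarrow> bool) \<Rightarrow> 'a \<Rightarrow> nat" where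
  "degree A v = card {u. adjacent A v u}"

definition loop_compl :: "'a \<Rightarrow> ('a \<Rightarrow> 'a \<Rightarrow> bool) \<Rightarrow> ('a \<Rightarrow> 'a \<Rightarrow> bool)" where
  "loop_compl v A = (\<lambda>x y. if x = v \<and> y = v then \<not> A x y else A x y)"

definition simple_local_compl :: "'a \<Rightarrow> ('a \<Rightarrow> 'a \<Rightarrow> bool) \<Rightarrow> ('a \<Rightarrow> 'a \<Rightarrow> bool)" where
  "simple_local_compl v A =
     (\<lambda>x y. if x \<noteq> y \<and> adjacent A v x \<and> adjacent A v y then \<not> A x y else A x y)"

definition nonsimple_local_compl :: "'a \<Rightarrow> ('a \<Rightarrow> 'a \<Rightarrow> bool) \<Rightarrow> ('a \<Rightarrow> 'a \<Rightarrow> bool)" where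
  "nonsimple_local_compl v A =
     (\<lambda>x y. if adjacent A v x \<and> adjacent A v y then \<not> A x y else A x y)"

definition local_step :: "'a set \<Rightarrow> ('a \<Rightarrow> 'a \<Rightarrow> bool) \<Rightarrow> ('a \<Rightarrow> 'a \<Rightarrow> bool) \<Rightarrow> bool" where
  "local_step V A B \<longleftrightarrow> (\<exists>v\<in>V. B = loop_compl v A \<or> B = simple_local_compl v A
                                    \<or> B = nonsimple_local_compl v A)"

definition locally_equivalent :: "'a set \<Rightarrow> ('a \<Rightarrow> 'a \<Rightarrow> bool) \<Rightarrow> ('a \<Rightarrow> 'a \<Rightarrow> bool) \<Rightarrow> bool" where
  "locally_equivalent V A B \<longleftrightarrow> (local_step V)\<^sup>*\<^sup>* A B"

text \<open>Elements of W(G): (v, Phi) = phi_G(v), (v, Chi) = chi_G(v), (v, Psi) = psi_G(v).\<close>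
datatype lbl = Phi | Chi | Psi

definition W :: "'a set \<Rightarrow> ('a \<times> lbl) set" where
  "W V = V \<times> UNIV"

text \<open>Column of IAS(G) (over GF(2) = bit) labelled by an element, entry in row x.\<close>
fun ias_col :: "('a \<Rightarrow> 'a \<Rightarrow> bool) \<Rightarrow> 'a \<times> lbl \<Rightarrow> 'a \<Rightarrow> bit" where
  "ias_col A (v, Phi) x = of_bool (x = v)"
| "ias_col A (v, Chi) x = of_bool (A x v)"
| "ias_col A (v, Psi) x = of_bool (A x v) + of_bool (x = v)"

text \<open>Dependence in the binary matroid M[IAS(G)]: a set of elements is dependent iff
  some nonempty subset of its columns is linearly dependent with all coefficients 1,
  i.e. sums to zero over GF(2).\<close>
definition ias_dependent :: "'a set \<Rightarrow> ('a \<Rightarrow> 'a \<Rightarrow> bool) \<Rightarrow> ('a \<times> lbl) set \<Rightarrow> bool" where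
  "ias_dependent V A S \<longleftrightarrow>
     (\<exists>T\<subseteq>S. T \<noteq> {} \<and> (\<forall>x\<in>V. (\<Sum>e\<in>T. ias_col A e x) = 0))"

definition ias_circuit :: "'a set \<Rightarrow> ('a \<Rightarrow> 'a \<Rightarrow> bool) \<Rightarrow> ('a \<times> lbl) set \<Rightarrow> bool" where
  "ias_circuit V A C \<longleftrightarrow> C \<subseteq> W V \<and> ias_dependent V A C \<and>
     (\<forall>D. D \<subset> C \<longrightarrow> \<not> ias_dependent V A D)"

definition transversal :: "'a set \<Rightarrow> ('a \<times> lbl) set \<Rightarrow> bool" where
  "transversal V T \<longleftrightarrow> T \<subseteq> W V \<and> (\<forall>v\<in>V. \<exists>!t. (v, t) \<in> T)"

definition transverse_circuit ::
  "'a set \<Rightarrow> ('a \<Rightarrow> 'a \<Rightarrow> bool) \<Rightarrow> ('a \<times> lbl) set \<Rightarrow> ('a \<times> lbl) set \<Rightarrow> bool" where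
  "transverse_circuit V A T C \<longleftrightarrow> C \<subseteq> T \<and> ias_circuit V A C"

end

theory Submission
  imports Defs
begin

(* A transversal is a labelling t of the vertices by phi, chi, psi, and its circuits are the
   minimal nonempty vertex sets whose labelled columns sum to zero.  A local operation at u acts
   on the columns of IAS(G) as the row operation "add row u to the rows of the neighbours of u",
   up to a vertex-wise relabelling; so zero sums, hence condition (2), are invariant under local
   equivalence.  If v and w are as in (1), labelling v and w by their open-neighbourhood columns
   and everything else by phi makes N[v] and N[w] the circuits in (2).  Conversely, given
   circuits X1 and X2 with non-phi labels at v1 and v2, local operations turn the labels of the
   other vertices of X1 and X2 into phi one at a time; afterwards the circuit equations say that
   N[v1] = X1 and N[v2] = X2. *)

section \<open>Labellings, cycles and circuits\<close>

text \<open>A labelling t of the vertices stands for the transversal of all pairs (x, t x).\<close>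

definition lab_cycle :: "'a set \<Rightarrow> ('a \<Rightarrow> 'a \<Rightarrow> bool) \<Rightarrow> ('a \<Rightarrow> lbl) \<Rightarrow> 'a set \<Rightarrow> bool" where
  "lab_cycle V A t Z \<longleftrightarrow> (\<forall>r\<in>V. (\<Sum>z\<in>Z. ias_col A (z, t z) r) = 0)"

definition lab_dependent :: "'a set \<Rightarrow> ('a \<Rightarrow> 'a \<Rightarrow> bool) \<Rightarrow> ('a \<Rightarrow> lbl) \<Rightarrow> 'a set \<Rightarrow> bool" where
  "lab_dependent V A t Y \<longleftrightarrow> (\<exists>Z\<subseteq>Y. Z \<noteq> {} \<and> lab_cycle V A t Z)"

definition lab_circuit :: "'a set \<Rightarrow> ('a \<Rightarrow> 'a \<Rightarrow> bool) \<Rightarrow> ('a \<Rightarrow> lbl) \<Rightarrow> 'a set \<Rightarrow> bool" where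
  "lab_circuit V A t Y \<longleftrightarrow>
     Y \<subseteq> V \<and> lab_dependent V A t Y \<and> (\<forall>Z. Z \<subset> Y \<longrightarrow> \<not> lab_dependent V A t Z)"

lemma lab_circuit_iff_minimal_cycle:
  "lab_circuit V A t X \<longleftrightarrow>
     X \<subseteq> V \<and> X \<noteq> {} \<and> lab_cycle V A t X \<and> (\<forall>Z. Z \<subset> X \<longrightarrow> Z \<noteq> {} \<longrightarrow> \<not> lab_cycle V A t Z)"
  unfolding lab_circuit_def lab_dependent_def by (blast dest: psubset_subset_trans)

lemma lab_dependent_has_circuit:
  assumes "finite Y" and "Y \<subseteq> V" and "lab_dependent V A t Y"
  shows "\<exists>C\<subseteq>Y. lab_circuit V A t C"
  using assms
proof (induction Y rule: finite_psubset_induct)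
  case (psubset Y)
  show ?case
  proof (cases "lab_circuit V A t Y")
    case False
    with psubset.prems obtain Z where Z: "Z \<subset> Y" "lab_dependent V A t Z"
      by (auto simp: lab_circuit_def)
    moreover have "finite Z" "Z \<subseteq> V"
      using Z(1) psubset.hyps psubset.prems(1) finite_subset by auto
    ultimately have "\<exists>C\<subseteq>Z. lab_circuit V A t C"
      using psubset.IH by blast
    with Z(1) show ?thesis by blast
  qed blast
qed

definition isolated_circuit_pair ::
  "'a set \<Rightarrow> ('a \<Rightarrow> 'a \<Rightarrow> bool) \<Rightarrow> ('a \<Rightarrow> lbl) \<Rightarrow> nat \<Rightarrow> nat \<Rightarrow> 'a set \<Rightarrow> 'a set \<Rightarrow> bool" where
  "isolated_circuit_pair V A t k1 k2 X1 X2 \<longleftrightarrow>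
     lab_circuit V A t X1 \<and> lab_circuit V A t X2 \<and> X1 \<inter> X2 = {} \<and>
     card X1 = k1 \<and> card X2 = k2 \<and>
     (\<forall>Y. lab_circuit V A t Y \<and> Y \<subseteq> X1 \<union> X2 \<longrightarrow> Y = X1 \<or> Y = X2)"

lemma isolated_circuit_pair_subset:
  "isolated_circuit_pair V A t k1 k2 X1 X2 \<Longrightarrow> X1 \<union> X2 \<subseteq> V"
  by (simp add: isolated_circuit_pair_def lab_circuit_def)

lemma isolated_circuit_pair_cong:
  assumes "\<And>Z. lab_cycle V B s Z \<longleftrightarrow> lab_cycle V A t Z"
  shows "isolated_circuit_pair V B s k1 k2 X1 X2 \<longleftrightarrow> isolated_circuit_pair V A t k1 k2 X1 X2"
  unfolding isolated_circuit_pair_def lab_circuit_def lab_dependent_def assms ..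

section \<open>Transversals as labellings\<close>

definition tagged :: "('a \<Rightarrow> lbl) \<Rightarrow> 'a set \<Rightarrow> ('a \<times> lbl) set" where
  "tagged t X = (\<lambda>x. (x, t x)) ` X"

lemma tagged_subset_tagged_iff [simp]: "tagged t X \<subseteq> tagged t Y \<longleftrightarrow> X \<subseteq> Y"
  by (auto simp: tagged_def)

lemma tagged_eq_iff [simp]: "tagged t X = tagged t Y \<longleftrightarrow> X = Y"
  by (auto simp: tagged_def)

lemma tagged_Un [simp]: "tagged t X \<union> tagged t Y = tagged t (X \<union> Y)"
  by (auto simp: tagged_def)

lemma tagged_Int [simp]: "tagged t X \<inter> tagged t Y = tagged t (X \<inter> Y)"
  by (auto simp: tagged_def)

lemma tagged_empty_iff [simp]: "tagged t X = {} \<longleftrightarrow> X = {}"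
  by (simp add: tagged_def)

lemma card_tagged [simp]: "card (tagged t X) = card X"
  by (simp add: tagged_def card_image inj_on_convol_ident)

lemma subset_tagged_iff: "C \<subseteq> tagged t Y \<longleftrightarrow> (\<exists>X\<subseteq>Y. C = tagged t X)"
  unfolding tagged_def by (rule subset_image_iff)

lemma psubset_tagged_iff: "C \<subset> tagged t Y \<longleftrightarrow> (\<exists>X\<subset>Y. C = tagged t X)"
  by (auto simp: psubset_eq subset_tagged_iff)

lemma ex_subset_tagged_iff: "(\<exists>C\<subseteq>tagged t Y. P C) \<longleftrightarrow> (\<exists>X\<subseteq>Y. P (tagged t X))"
  unfolding subset_tagged_iff by blast

lemma all_psubset_tagged_iff: "(\<forall>C\<subset>tagged t Y. P C) \<longleftrightarrow> (\<forall>X\<subset>Y. P (tagged t X))"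
  unfolding psubset_tagged_iff by blast

lemma tagged_subset_W_iff: "tagged t X \<subseteq> W V \<longleftrightarrow> X \<subseteq> V"
  by (auto simp: tagged_def W_def)

lemma transversal_iff_tagged: "transversal V T \<longleftrightarrow> (\<exists>t. T = tagged t V)"
proof
  assume T: "transversal V T"
  define t where "t v = (THE l. (v, l) \<in> T)" for v
  have unique: "\<exists>!l. (v, l) \<in> T" if "v \<in> V" for v
    using T that unfolding transversal_def by blast
  have "(v, l) \<in> T \<longleftrightarrow> v \<in> V \<and> l = t v" for v l
    using T unique[of v] theI'[OF unique[of v]] unfolding transversal_def W_def t_def by blast
  then have "T = tagged t V" by (auto simp: set_eq_iff split_paired_all tagged_def)
  then show "\<exists>t. T = tagged t V" by blast
qed (auto simp: transversal_def tagged_def W_def)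

lemma ias_dependent_tagged: "ias_dependent V A (tagged t Y) \<longleftrightarrow> lab_dependent V A t Y"
proof -
  have "(\<Sum>e\<in>tagged t Z. ias_col A e r) = (\<Sum>z\<in>Z. ias_col A (z, t z) r)" for Z r
    by (simp add: tagged_def sum.reindex inj_on_convol_ident)
  then have "(\<forall>x\<in>V. (\<Sum>e\<in>tagged t Z. ias_col A e x) = 0) \<longleftrightarrow> lab_cycle V A t Z" for Z
    by (simp add: lab_cycle_def)
  then show ?thesis
    unfolding ias_dependent_def lab_dependent_def ex_subset_tagged_iff by simp
qed

lemma ias_circuit_tagged: "ias_circuit V A (tagged t Y) \<longleftrightarrow> lab_circuit V A t Y"
  unfolding ias_circuit_def lab_circuit_def tagged_subset_W_iff ias_dependent_tagged
    all_psubset_tagged_iff ..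

lemma transverse_circuit_tagged:
  "transverse_circuit V A (tagged t V) C \<longleftrightarrow> (\<exists>X. C = tagged t X \<and> lab_circuit V A t X)"
  by (auto simp: transverse_circuit_def subset_tagged_iff ias_circuit_tagged lab_circuit_def)

lemma transverse_circuits_within_tagged_iff:
  "(\<forall>C. transverse_circuit V A (tagged t V) C \<and> C \<subseteq> tagged t (X1 \<union> X2)
        \<longrightarrow> C = tagged t X1 \<or> C = tagged t X2)
   \<longleftrightarrow> (\<forall>Y. lab_circuit V A t Y \<and> Y \<subseteq> X1 \<union> X2 \<longrightarrow> Y = X1 \<or> Y = X2)"
  unfolding transverse_circuit_tagged by (metis tagged_subset_tagged_iff tagged_eq_iff)

lemma transverse_circuit_pair_iff:
  "(\<exists>T. transversal V T \<and>
      (\<exists>C1 C2. transverse_circuit V A T C1 \<and> transverse_circuit V A T C2 \<and>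
         C1 \<inter> C2 = {} \<and> card C1 = k1 \<and> card C2 = k2 \<and>
         (\<forall>C. transverse_circuit V A T C \<and> C \<subseteq> C1 \<union> C2 \<longrightarrow> C = C1 \<or> C = C2)))
   \<longleftrightarrow> (\<exists>t X1 X2. isolated_circuit_pair V A t k1 k2 X1 X2)" (is "?L \<longleftrightarrow> ?R")
proof
  assume ?L
  then obtain t C1 C2 where C: "transverse_circuit V A (tagged t V) C1"
    "transverse_circuit V A (tagged t V) C2" "C1 \<inter> C2 = {}" "card C1 = k1" "card C2 = k2"
    "\<forall>C. transverse_circuit V A (tagged t V) C \<and> C \<subseteq> C1 \<union> C2 \<longrightarrow> C = C1 \<or> C = C2"
    unfolding transversal_iff_tagged by blast
  from C(1,2) obtain X1 X2 where "C1 = tagged t X1" "C2 = tagged t X2"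
    and "lab_circuit V A t X1" "lab_circuit V A t X2"
    unfolding transverse_circuit_tagged by blast
  with C(3-6) have "isolated_circuit_pair V A t k1 k2 X1 X2"
    unfolding isolated_circuit_pair_def by (simp add: transverse_circuits_within_tagged_iff)
  then show ?R by blast
next
  assume ?R
  then obtain t X1 X2 where "isolated_circuit_pair V A t k1 k2 X1 X2" by blast
  then have X: "lab_circuit V A t X1" "lab_circuit V A t X2" "X1 \<inter> X2 = {}"
    "card X1 = k1" "card X2 = k2"
    "\<forall>Y. lab_circuit V A t Y \<and> Y \<subseteq> X1 \<union> X2 \<longrightarrow> Y = X1 \<or> Y = X2"
    unfolding isolated_circuit_pair_def by auto
  have "transversal V (tagged t V)"
    by (auto simp: transversal_iff_tagged)
  moreover have "transverse_circuit V A (tagged t V) (tagged t X1)"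
    "transverse_circuit V A (tagged t V) (tagged t X2)"
    using X(1,2) by (auto simp: transverse_circuit_tagged)
  moreover have "tagged t X1 \<inter> tagged t X2 = {}" "card (tagged t X1) = k1" "card (tagged t X2) = k2"
    using X(3-5) by simp_all
  moreover have "\<forall>C. transverse_circuit V A (tagged t V) C \<and> C \<subseteq> tagged t X1 \<union> tagged t X2
                   \<longrightarrow> C = tagged t X1 \<or> C = tagged t X2"
    using X(6) transverse_circuits_within_tagged_iff[of V A t X1 X2] by simp
  ultimately show ?L by blast
qed

section \<open>Local operations act on columns by row operations\<close>

fun swap_chi_psi :: "lbl \<Rightarrow> lbl" where
  "swap_chi_psi Phi = Phi" | "swap_chi_psi Chi = Psi" | "swap_chi_psi Psi = Chi"

fun swap_phi_chi :: "lbl \<Rightarrow> lbl" where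
  "swap_phi_chi Phi = Chi" | "swap_phi_chi Chi = Phi" | "swap_phi_chi Psi = Psi"

fun swap_phi_psi :: "lbl \<Rightarrow> lbl" where
  "swap_phi_psi Phi = Psi" | "swap_phi_psi Chi = Chi" | "swap_phi_psi Psi = Phi"

definition pivot_lbl :: "('a \<Rightarrow> 'a \<Rightarrow> bool) \<Rightarrow> 'a \<Rightarrow> lbl \<Rightarrow> lbl" where
  "pivot_lbl A u l = (if A u u then swap_phi_chi l else swap_phi_psi l)"

definition relabel_simple :: "('a \<Rightarrow> 'a \<Rightarrow> bool) \<Rightarrow> 'a \<Rightarrow> 'a \<Rightarrow> lbl \<Rightarrow> lbl" where
  "relabel_simple A u x l =
     (if x = u then pivot_lbl A u l else if adjacent A u x then swap_chi_psi l else l)"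

definition relabel_nonsimple :: "('a \<Rightarrow> 'a \<Rightarrow> bool) \<Rightarrow> 'a \<Rightarrow> 'a \<Rightarrow> lbl \<Rightarrow> lbl" where
  "relabel_nonsimple A u x l = (if x = u then pivot_lbl A u l else l)"

definition relabel_loop :: "'a \<Rightarrow> 'a \<Rightarrow> lbl \<Rightarrow> lbl" where
  "relabel_loop u x l = (if x = u then swap_chi_psi l else l)"

lemma relabel_involutions:
  "relabel_simple A u x (relabel_simple A u x l) = l"
  "relabel_nonsimple A u x (relabel_nonsimple A u x l) = l"
  "relabel_loop u x (relabel_loop u x l) = l"
  by (cases l; simp add: relabel_simple_def relabel_nonsimple_def relabel_loop_def pivot_lbl_def)+

definition row_op :: "('a \<Rightarrow> 'a \<Rightarrow> bool) \<Rightarrow> 'a \<Rightarrow> ('a \<Rightarrow> bit) \<Rightarrow> 'a \<Rightarrow> bit" where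
  "row_op A u f r = f r + (if adjacent A u r then f u else 0)"

lemma ias_col_simple_local_compl:
  assumes sym: "\<And>a b. A a b = A b a"
  shows "ias_col (simple_local_compl u A) (x, relabel_simple A u x l) r
           = row_op A u (ias_col A (x, l)) r"
  using sym[of u x] sym[of u r] sym[of x r]
  by (cases l) (auto simp: relabel_simple_def pivot_lbl_def row_op_def simple_local_compl_def
                     adjacent_def)

lemma ias_col_nonsimple_local_compl:
  assumes sym: "\<And>a b. A a b = A b a"
  shows "ias_col (nonsimple_local_compl u A) (x, relabel_nonsimple A u x l) r
           = row_op A u (ias_col A (x, l)) r"
  using sym[of u x] sym[of u r] sym[of x r]
  by (cases l) (auto simp: relabel_nonsimple_def pivot_lbl_def row_op_def
                     nonsimple_local_compl_def adjacent_def)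

lemma ias_col_loop_compl: "ias_col (loop_compl u A) (x, relabel_loop u x l) r = ias_col A (x, l) r"
  by (cases l) (auto simp: relabel_loop_def loop_compl_def)

lemma sum_row_op: "(\<Sum>z\<in>Z. row_op A u (f z) r) = row_op A u (\<lambda>r. \<Sum>z\<in>Z. f z r) r"
  by (cases "adjacent A u r") (simp_all only: row_op_def sum.distrib if_True if_False
      sum.neutral_const add_0_right)

lemma row_op_vanishes_iff:
  assumes "u \<in> V"
  shows "(\<forall>r\<in>V. row_op A u g r = 0) \<longleftrightarrow> (\<forall>r\<in>V. g r = 0)"
proof
  assume vanish: "\<forall>r\<in>V. row_op A u g r = 0"
  then have "g u = 0" using assms by (auto simp: row_op_def adjacent_def)
  with vanish show "\<forall>r\<in>V. g r = 0" by (auto simp: row_op_def split: if_splits)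
qed (use assms in \<open>auto simp: row_op_def\<close>)

lemma lab_cycle_row_op:
  assumes "u \<in> V" and col: "\<And>x l r. ias_col B (x, \<sigma> x l) r = row_op A u (ias_col A (x, l)) r"
  shows "lab_cycle V B (\<lambda>x. \<sigma> x (t x)) Z \<longleftrightarrow> lab_cycle V A t Z"
proof -
  have "lab_cycle V B (\<lambda>x. \<sigma> x (t x)) Z
          \<longleftrightarrow> (\<forall>r\<in>V. row_op A u (\<lambda>r. \<Sum>z\<in>Z. ias_col A (z, t z) r) r = 0)"
    unfolding lab_cycle_def col sum_row_op ..
  also have "\<dots> \<longleftrightarrow> lab_cycle V A t Z"
    unfolding lab_cycle_def by (rule row_op_vanishes_iff[OF assms(1)])
  finally show ?thesis .
qed

lemma lab_cycle_simple_local_compl: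
  assumes "looped_simple_graph V A" and "u \<in> V"
  shows "lab_cycle V (simple_local_compl u A) (\<lambda>x. relabel_simple A u x (t x)) Z
           \<longleftrightarrow> lab_cycle V A t Z"
proof -
  have "\<And>a b. A a b = A b a" using assms(1) by (simp add: looped_simple_graph_def)
  then show ?thesis by (rule lab_cycle_row_op[OF assms(2) ias_col_simple_local_compl])
qed

lemma lab_cycle_nonsimple_local_compl:
  assumes "looped_simple_graph V A" and "u \<in> V"
  shows "lab_cycle V (nonsimple_local_compl u A) (\<lambda>x. relabel_nonsimple A u x (t x)) Z
           \<longleftrightarrow> lab_cycle V A t Z"
proof -
  have "\<And>a b. A a b = A b a" using assms(1) by (simp add: looped_simple_graph_def)
  then show ?thesis by (rule lab_cycle_row_op[OF assms(2) ias_col_nonsimple_local_compl])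
qed

lemma lab_cycle_loop_compl:
  "lab_cycle V (loop_compl u A) (\<lambda>x. relabel_loop u x (t x)) Z \<longleftrightarrow> lab_cycle V A t Z"
  unfolding lab_cycle_def ias_col_loop_compl ..

lemma local_step_looped_simple_graph:
  assumes "looped_simple_graph V A" and "local_step V A B"
  shows "looped_simple_graph V B"
proof -
  obtain u where u: "u \<in> V" and B: "B = loop_compl u A \<or> B = simple_local_compl u A
                                      \<or> B = nonsimple_local_compl u A"
    using assms(2) by (auto simp: local_step_def)
  have sym: "\<And>a b. A a b = A b a" and supp: "\<And>a b. A a b \<Longrightarrow> a \<in> V \<and> b \<in> V"
    using assms(1) by (auto simp: looped_simple_graph_def)
  from B have "(\<forall>a b. B a b = B b a) \<and> (\<forall>a b. B a b \<longrightarrow> a \<in> V \<and> b \<in> V)"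
  proof (elim disjE)
    assume "B = loop_compl u A"
    then show ?thesis using sym supp u by (auto simp: loop_compl_def)
  next
    assume "B = simple_local_compl u A"
    then show ?thesis using sym supp
      unfolding simple_local_compl_def adjacent_def by (metis (full_types))
  next
    assume "B = nonsimple_local_compl u A"
    then show ?thesis using sym supp
      unfolding nonsimple_local_compl_def adjacent_def by (metis (full_types))
  qed
  then show ?thesis using assms(1) unfolding looped_simple_graph_def by blast
qed

lemma locally_equivalent_looped_simple_graph:
  assumes "locally_equivalent V A B" and "looped_simple_graph V A"
  shows "looped_simple_graph V B"
  using assms(1)[unfolded locally_equivalent_def] assms(2)
  by induction (auto intro: local_step_looped_simple_graph)

lemma locally_equivalent_trans:
  "locally_equivalent V A B \<Longrightarrow> locally_equivalent V B C \<Longrightarrow> locally_equivalent V A C"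
  unfolding locally_equivalent_def by (rule rtranclp_trans)

lemma local_step_relabelling:
  assumes "looped_simple_graph V A" and "local_step V A B"
  shows "\<exists>\<sigma>. (\<forall>x l. \<sigma> x (\<sigma> x l) = l) \<and>
           (\<forall>t Z. lab_cycle V B (\<lambda>x. \<sigma> x (t x)) Z \<longleftrightarrow> lab_cycle V A t Z)"
proof -
  obtain u where u: "u \<in> V" and "B = loop_compl u A \<or> B = simple_local_compl u A
                                   \<or> B = nonsimple_local_compl u A"
    using assms(2) by (auto simp: local_step_def)
  then consider "B = loop_compl u A" | "B = simple_local_compl u A"
    | "B = nonsimple_local_compl u A" by blast
  then show ?thesis
  proof cases
    case 1
    then show ?thesis
      by (intro exI[of _ "relabel_loop u"]) (simp add: relabel_involutions lab_cycle_loop_compl)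
  next
    case 2
    then show ?thesis
      by (intro exI[of _ "relabel_simple A u"])
        (simp add: relabel_involutions lab_cycle_simple_local_compl[OF assms(1) u])
  next
    case 3
    then show ?thesis
      by (intro exI[of _ "relabel_nonsimple A u"])
        (simp add: relabel_involutions lab_cycle_nonsimple_local_compl[OF assms(1) u])
  qed
qed

lemma locally_equivalent_isolated_circuit_pair:
  assumes "locally_equivalent V A B" and "looped_simple_graph V A"
  shows "(\<exists>t X1 X2. isolated_circuit_pair V A t k1 k2 X1 X2)
           \<longleftrightarrow> (\<exists>t X1 X2. isolated_circuit_pair V B t k1 k2 X1 X2)"
  using assms(1)[unfolded locally_equivalent_def]
proof induction
  case (step B C)
  have "looped_simple_graph V B"
    using step.hyps(1) assms(2) locally_equivalent_looped_simple_graph locally_equivalent_def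
    by metis
  then obtain \<sigma> where inv: "\<And>x l. \<sigma> x (\<sigma> x l) = l"
    and cyc: "\<And>t Z. lab_cycle V C (\<lambda>x. \<sigma> x (t x)) Z \<longleftrightarrow> lab_cycle V B t Z"
    using local_step_relabelling step.hyps(2) by blast
  have "isolated_circuit_pair V B (\<lambda>x. \<sigma> x (t x)) k1 k2 X1 X2
          \<longleftrightarrow> isolated_circuit_pair V C t k1 k2 X1 X2" for t X1 X2
    using cyc[of "\<lambda>x. \<sigma> x (t x)"] by (intro isolated_circuit_pair_cong) (simp add: inv)
  moreover have "isolated_circuit_pair V C (\<lambda>x. \<sigma> x (t x)) k1 k2 X1 X2
          \<longleftrightarrow> isolated_circuit_pair V B t k1 k2 X1 X2" for t X1 X2
    using cyc by (rule isolated_circuit_pair_cong)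
  ultimately show ?case using step.IH by metis
qed simp

lemma bit_add_eq_0_iff: "(a :: bit) + b = 0 \<longleftrightarrow> a = b"
  by (cases a; cases b) simp_all

lemma sum_of_bool_eq_bit: "finite Y \<Longrightarrow> (\<Sum>y\<in>Y. (of_bool (r = y) :: bit)) = of_bool (r \<in> Y)"
  by (simp add: of_bool_def sum.delta')

lemma sum_ias_col_Phi_outside:
  assumes "finite Y" and "\<And>y. y \<in> Y - S \<Longrightarrow> t y = Phi"
  shows "(\<Sum>y\<in>Y. ias_col A (y, t y) r) = of_bool (r \<in> Y - S) + (\<Sum>y\<in>Y \<inter> S. ias_col A (y, t y) r)"
proof -
  have "(\<Sum>y\<in>Y. ias_col A (y, t y) r)
          = (\<Sum>y\<in>Y \<inter> S. ias_col A (y, t y) r) + (\<Sum>y\<in>Y - S. ias_col A (y, t y) r)"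
    by (rule sum.Int_Diff[OF assms(1)])
  also have "(\<Sum>y\<in>Y - S. ias_col A (y, t y) r) = (\<Sum>y\<in>Y - S. of_bool (r = y))"
    using assms(2) by (intro sum.cong) auto
  also have "\<dots> = of_bool (r \<in> Y - S)"
    using assms(1) by (simp add: sum_of_bool_eq_bit)
  finally show ?thesis by (simp only: ac_simps)
qed

lemma lab_circuit_has_non_Phi:
  assumes "finite V" and "lab_circuit V A t X"
  shows "\<exists>v\<in>X. t v \<noteq> Phi"
proof (rule ccontr)
  assume "\<not> ?thesis"
  then have Phi: "\<And>x. x \<in> X \<Longrightarrow> t x = Phi" by blast
  from assms(2) obtain x where x: "x \<in> X" and "X \<subseteq> V" and cyc: "lab_cycle V A t X"
    unfolding lab_circuit_iff_minimal_cycle by blast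
  then have "finite X" "x \<in> V" using assms(1) finite_subset by auto
  have "(\<Sum>y\<in>X. ias_col A (y, t y) x) = (\<Sum>y\<in>X. of_bool (x = y))"
    using Phi by (intro sum.cong) auto
  also have "\<dots> = 1"
    using \<open>finite X\<close> x by (simp add: sum_of_bool_eq_bit)
  finally have "(\<Sum>y\<in>X. ias_col A (y, t y) x) \<noteq> 0"
    by simp
  with cyc \<open>x \<in> V\<close> show False
    unfolding lab_cycle_def by blast
qed

text \<open>The non-phi labels of u whose columns are the open and the closed neighbourhood of u.\<close>

definition open_lbl :: "('a \<Rightarrow> 'a \<Rightarrow> bool) \<Rightarrow> 'a \<Rightarrow> lbl" where
  "open_lbl A u = (if A u u then Psi else Chi)"

definition closed_lbl :: "('a \<Rightarrow> 'a \<Rightarrow> bool) \<Rightarrow> 'a \<Rightarrow> lbl" where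
  "closed_lbl A u = (if A u u then Chi else Psi)"

lemma lbl_cases_open_closed: "l = Phi \<or> l = open_lbl A u \<or> l = closed_lbl A u"
  by (cases l) (auto simp: open_lbl_def closed_lbl_def)

lemma ias_col_open_lbl:
  assumes "looped_simple_graph V A"
  shows "ias_col A (u, open_lbl A u) r = of_bool (adjacent A u r)"
  using assms by (auto simp: open_lbl_def adjacent_def looped_simple_graph_def)

lemma ias_col_closed_lbl:
  assumes "looped_simple_graph V A"
  shows "ias_col A (u, closed_lbl A u) r = of_bool (r = u \<or> adjacent A u r)"
  using assms by (auto simp: closed_lbl_def adjacent_def looped_simple_graph_def)

definition closed_nbhd :: "('a \<Rightarrow> 'a \<Rightarrow> bool) \<Rightarrow> 'a \<Rightarrow> 'a set" where
  "closed_nbhd A v = insert v {u. adjacent A v u}"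

lemma adjacent_sym: "looped_simple_graph V A \<Longrightarrow> adjacent A u v \<longleftrightarrow> adjacent A v u"
  by (auto simp: adjacent_def looped_simple_graph_def)

lemma adjacent_in_vertices: "looped_simple_graph V A \<Longrightarrow> adjacent A u v \<Longrightarrow> u \<in> V \<and> v \<in> V"
  by (auto simp: adjacent_def looped_simple_graph_def)

lemma closed_nbhd_subset: "looped_simple_graph V A \<Longrightarrow> v \<in> V \<Longrightarrow> closed_nbhd A v \<subseteq> V"
  by (auto simp: closed_nbhd_def dest: adjacent_in_vertices)

lemma finite_nbhd: "looped_simple_graph V A \<Longrightarrow> finite {u. adjacent A v u}"
  by (rule finite_subset[of _ V]) (auto simp: looped_simple_graph_def adjacent_def)

lemma finite_closed_nbhd: "looped_simple_graph V A \<Longrightarrow> finite (closed_nbhd A v)"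
  by (simp add: closed_nbhd_def finite_nbhd)

lemma card_closed_nbhd: "looped_simple_graph V A \<Longrightarrow> card (closed_nbhd A v) = Suc (degree A v)"
  unfolding closed_nbhd_def degree_def
  by (rule card_insert_disjoint[OF finite_nbhd]) (simp_all add: adjacent_def)

section \<open>From two separated stars to an isolated pair of circuits\<close>

definition has_separated_stars :: "'a set \<Rightarrow> ('a \<Rightarrow> 'a \<Rightarrow> bool) \<Rightarrow> nat \<Rightarrow> nat \<Rightarrow> bool" where
  "has_separated_stars V B k1 k2 \<longleftrightarrow>
     (\<exists>v\<in>V. \<exists>w\<in>V. v \<noteq> w \<and> \<not> adjacent B v w \<and>
        degree B v = k1 - 1 \<and> degree B w = k2 - 1 \<and>
        \<not> (\<exists>u. adjacent B v u \<and> adjacent B w u))"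

lemma lab_cycle_star_labelling:
  assumes G: "looped_simple_graph V A" and "v \<noteq> w" and vw: "\<not> adjacent A v w"
    and common: "\<And>u. \<not> (adjacent A v u \<and> adjacent A w u)"
    and tv: "t v = open_lbl A v" and tw: "t w = open_lbl A w"
    and t_other: "\<And>x. x \<noteq> v \<Longrightarrow> x \<noteq> w \<Longrightarrow> t x = Phi"
    and Y: "Y \<subseteq> V"
  shows "lab_cycle V A t Y \<longleftrightarrow>
           Y = (if v \<in> Y then closed_nbhd A v else {}) \<union> (if w \<in> Y then closed_nbhd A w else {})"
proof -
  have "finite Y" using Y G finite_subset by (auto simp: looped_simple_graph_def)
  have row: "(\<Sum>y\<in>Y. ias_col A (y, t y) r) =
      of_bool ((r \<in> Y - {v, w}) \<noteq> (v \<in> Y \<and> adjacent A v r \<or> w \<in> Y \<and> adjacent A w r))" for r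
  proof -
    have "(\<Sum>y\<in>Y \<inter> {v, w}. ias_col A (y, t y) r)
            = (\<Sum>y\<in>{v, w}. if y \<in> Y then ias_col A (y, t y) r else 0)"
      by (metis Int_commute sum.inter_restrict finite.emptyI finite_insert)
    also have "\<dots> = of_bool (v \<in> Y \<and> adjacent A v r) + of_bool (w \<in> Y \<and> adjacent A w r)"
      using \<open>v \<noteq> w\<close> by (simp add: tv tw ias_col_open_lbl[OF G])
    finally show ?thesis
      using sum_ias_col_Phi_outside[OF \<open>finite Y\<close>, of "{v, w}" t A r] t_other common[of r]
      by auto
  qed
  have "lab_cycle V A t Y \<longleftrightarrow>
          (\<forall>r\<in>V. r \<in> Y - {v, w} \<longleftrightarrow> v \<in> Y \<and> adjacent A v r \<or> w \<in> Y \<and> adjacent A w r)"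
    by (simp add: lab_cycle_def row)
  also have "\<dots> \<longleftrightarrow>
      Y = (if v \<in> Y then closed_nbhd A v else {}) \<union> (if w \<in> Y then closed_nbhd A w else {})"
    using Y vw adjacent_sym[OF G, of v w] adjacent_in_vertices[OF G]
    by (auto simp: closed_nbhd_def adjacent_def)
  finally show ?thesis .
qed

lemma closed_nbhd_lab_circuit:
  assumes G: "looped_simple_graph V A" and "v \<noteq> w" and vw: "\<not> adjacent A v w"
    and common: "\<And>u. \<not> (adjacent A v u \<and> adjacent A w u)"
    and tv: "t v = open_lbl A v" and tw: "t w = open_lbl A w"
    and t_other: "\<And>x. x \<noteq> v \<Longrightarrow> x \<noteq> w \<Longrightarrow> t x = Phi"
    and "v \<in> V"
  shows "lab_circuit V A t (closed_nbhd A v)"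
proof -
  have sub: "closed_nbhd A v \<subseteq> V" by (rule closed_nbhd_subset[OF G \<open>v \<in> V\<close>])
  have "w \<notin> closed_nbhd A v" using \<open>v \<noteq> w\<close> vw by (simp add: closed_nbhd_def)
  then have cycle_iff: "lab_cycle V A t Z \<longleftrightarrow> Z = (if v \<in> Z then closed_nbhd A v else {})"
    if "Z \<subseteq> closed_nbhd A v" for Z
    using lab_cycle_star_labelling[OF assms(1-7), of Z] that sub by auto
  show ?thesis
    unfolding lab_circuit_iff_minimal_cycle
    using sub cycle_iff[of "closed_nbhd A v"] cycle_iff by (auto simp: closed_nbhd_def)
qed

lemma star_labelling_isolated_circuit_pair:
  assumes G: "looped_simple_graph V A" and "v \<in> V" "w \<in> V" "v \<noteq> w" and vw: "\<not> adjacent A v w"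
    and common: "\<And>u. \<not> (adjacent A v u \<and> adjacent A w u)"
    and tv: "t v = open_lbl A v" and tw: "t w = open_lbl A w"
    and t_other: "\<And>x. x \<noteq> v \<Longrightarrow> x \<noteq> w \<Longrightarrow> t x = Phi"
  shows "isolated_circuit_pair V A t (card (closed_nbhd A v)) (card (closed_nbhd A w))
           (closed_nbhd A v) (closed_nbhd A w)"
proof -
  have wv: "\<not> adjacent A w v" using vw adjacent_sym[OF G] by blast
  have circuit_v: "lab_circuit V A t (closed_nbhd A v)"
    using closed_nbhd_lab_circuit[OF G \<open>v \<noteq> w\<close> vw common tv tw t_other \<open>v \<in> V\<close>] .
  have circuit_w: "lab_circuit V A t (closed_nbhd A w)"
    using closed_nbhd_lab_circuit[OF G \<open>v \<noteq> w\<close>[symmetric] wv _ tw tv _ \<open>w \<in> V\<close>] common t_other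
    by blast
  have disjoint: "closed_nbhd A v \<inter> closed_nbhd A w = {}"
    using \<open>v \<noteq> w\<close> vw wv common by (auto simp: closed_nbhd_def)
  have "Y = closed_nbhd A v \<or> Y = closed_nbhd A w"
    if Y: "lab_circuit V A t Y" "Y \<subseteq> closed_nbhd A v \<union> closed_nbhd A w" for Y
  proof (rule ccontr)
    assume neither: "\<not> ?thesis"
    from Y(1) have "Y \<subseteq> V" "Y \<noteq> {}" "lab_cycle V A t Y"
      and minimal: "\<And>Z. Z \<subset> Y \<Longrightarrow> Z \<noteq> {} \<Longrightarrow> \<not> lab_cycle V A t Z"
      unfolding lab_circuit_iff_minimal_cycle by blast+
    then have "Y = closed_nbhd A v \<union> closed_nbhd A w"
      using lab_cycle_star_labelling[OF G \<open>v \<noteq> w\<close> vw common tv tw t_other] neither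
      by (auto split: if_splits)
    then have "closed_nbhd A v \<subset> Y"
      using disjoint by (auto simp: closed_nbhd_def)
    with circuit_v minimal show False
      unfolding lab_circuit_iff_minimal_cycle by blast
  qed
  then show ?thesis
    using circuit_v circuit_w disjoint unfolding isolated_circuit_pair_def by blast
qed

lemma separated_stars_imp_isolated_circuit_pair:
  assumes G: "looped_simple_graph V A" and "k1 > 0" "k2 > 0" and "has_separated_stars V A k1 k2"
  shows "\<exists>t X1 X2. isolated_circuit_pair V A t k1 k2 X1 X2"
proof -
  obtain v w where vw: "v \<in> V" "w \<in> V" "v \<noteq> w" "\<not> adjacent A v w"
    and degrees: "degree A v = k1 - 1" "degree A w = k2 - 1"
    and common: "\<And>u. \<not> (adjacent A v u \<and> adjacent A w u)"
    using assms(4) unfolding has_separated_stars_def by blast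
  define t where "t x = (if x = v then open_lbl A v else if x = w then open_lbl A w else Phi)" for x
  have "card (closed_nbhd A v) = k1" "card (closed_nbhd A w) = k2"
    using card_closed_nbhd[OF G] degrees assms(2,3) by simp_all
  moreover have "isolated_circuit_pair V A t (card (closed_nbhd A v)) (card (closed_nbhd A w))
                   (closed_nbhd A v) (closed_nbhd A w)"
    using vw by (intro star_labelling_isolated_circuit_pair[OF G _ _ _ _ common]) (auto simp: t_def)
  ultimately show ?thesis by metis
qed

section \<open>From an isolated pair of circuits to two separated stars\<close>

lemma lab_circuit_single_non_Phi:
  assumes G: "looped_simple_graph V A" and X: "lab_circuit V A t X"
    and "v \<in> X" "t v \<noteq> Phi" and Phi: "\<And>x. x \<in> X - {v} \<Longrightarrow> t x = Phi"
  shows "closed_nbhd A v = X"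
proof -
  from X have "X \<subseteq> V" and cyc: "lab_cycle V A t X"
    unfolding lab_circuit_iff_minimal_cycle by auto
  then have "finite X" "v \<in> V"
    using G \<open>v \<in> X\<close> finite_subset by (auto simp: looped_simple_graph_def)
  have row: "ias_col A (v, t v) r = of_bool (r \<in> X - {v})" if "r \<in> V" for r
  proof -
    have "(\<Sum>y\<in>X. ias_col A (y, t y) r) = of_bool (r \<in> X - {v}) + ias_col A (v, t v) r"
      using sum_ias_col_Phi_outside[OF \<open>finite X\<close>, of "{v}"] Phi \<open>v \<in> X\<close> by (simp add: Int_absorb1)
    with cyc that show ?thesis
      unfolding lab_cycle_def by (metis bit_add_eq_0_iff)
  qed
  have "ias_col A (v, t v) v = 0"
    using row[OF \<open>v \<in> V\<close>] by simp
  moreover have "ias_col A (v, closed_lbl A v) v = 1"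
    by (simp add: ias_col_closed_lbl[OF G])
  ultimately have "t v \<noteq> closed_lbl A v"
    by (metis zero_neq_one)
  then have "t v = open_lbl A v"
    using lbl_cases_open_closed[of "t v" A v] \<open>t v \<noteq> Phi\<close> by blast
  then have "adjacent A v r \<longleftrightarrow> r \<in> X - {v}" if "r \<in> V" for r
    using row[OF that] ias_col_open_lbl[OF G] by (simp add: of_bool_eq_iff)
  then show ?thesis
    using \<open>X \<subseteq> V\<close> \<open>v \<in> X\<close> adjacent_in_vertices[OF G] by (auto simp: closed_nbhd_def)
qed

lemma settled_isolated_circuit_pair_imp_separated_stars:
  assumes G: "looped_simple_graph V A" and P: "isolated_circuit_pair V A t k1 k2 X1 X2"
    and v: "v1 \<in> X1" "v2 \<in> X2" "t v1 \<noteq> Phi" "t v2 \<noteq> Phi"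
    and settled: "\<And>x. x \<in> X1 \<union> X2 - {v1, v2} \<Longrightarrow> t x = Phi"
  shows "has_separated_stars V A k1 k2"
proof -
  from P have circuits: "lab_circuit V A t X1" "lab_circuit V A t X2"
    and disjoint: "X1 \<inter> X2 = {}" and cards: "card X1 = k1" "card X2 = k2"
    unfolding isolated_circuit_pair_def by blast+
  have N1: "closed_nbhd A v1 = X1"
    using lab_circuit_single_non_Phi[OF G circuits(1) v(1,3)] settled disjoint v(2) by blast
  have N2: "closed_nbhd A v2 = X2"
    using lab_circuit_single_non_Phi[OF G circuits(2) v(2,4)] settled disjoint v(1) by blast
  have "v1 \<in> V" "v2 \<in> V"
    using isolated_circuit_pair_subset[OF P] v(1,2) by blast+
  moreover have "degree A v1 = k1 - 1" "degree A v2 = k2 - 1"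
    using card_closed_nbhd[OF G] N1 N2 cards by (metis diff_Suc_1)+
  moreover have "v1 \<noteq> v2" "\<not> adjacent A v1 v2" "\<not> (\<exists>u. adjacent A v1 u \<and> adjacent A v2 u)"
    using N1 N2 disjoint v(1,2) by (auto simp: closed_nbhd_def)
  ultimately show ?thesis
    unfolding has_separated_stars_def by blast
qed

definition cycle_equivalent ::
  "'a set \<Rightarrow> ('a \<Rightarrow> 'a \<Rightarrow> bool) \<Rightarrow> ('a \<Rightarrow> lbl) \<Rightarrow> ('a \<Rightarrow> 'a \<Rightarrow> bool) \<Rightarrow> ('a \<Rightarrow> lbl) \<Rightarrow> bool" where
  "cycle_equivalent V A t B s \<longleftrightarrow>
     locally_equivalent V A B \<and> (\<forall>Z. lab_cycle V B s Z \<longleftrightarrow> lab_cycle V A t Z)"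

lemma cycle_equivalent_refl: "cycle_equivalent V A t A t"
  by (simp add: cycle_equivalent_def locally_equivalent_def)

lemma cycle_equivalent_trans:
  "cycle_equivalent V A t B s \<Longrightarrow> cycle_equivalent V B s C r \<Longrightarrow> cycle_equivalent V A t C r"
  by (auto simp: cycle_equivalent_def intro: locally_equivalent_trans)

lemma cycle_equivalent_simple_local_compl:
  "looped_simple_graph V A \<Longrightarrow> u \<in> V \<Longrightarrow>
     cycle_equivalent V A t (simple_local_compl u A) (\<lambda>x. relabel_simple A u x (t x))"
  unfolding cycle_equivalent_def locally_equivalent_def
  by (auto intro!: r_into_rtranclp simp: local_step_def lab_cycle_simple_local_compl)

lemma cycle_equivalent_nonsimple_local_compl:
  "looped_simple_graph V A \<Longrightarrow> u \<in> V \<Longrightarrow>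
     cycle_equivalent V A t (nonsimple_local_compl u A) (\<lambda>x. relabel_nonsimple A u x (t x))"
  unfolding cycle_equivalent_def locally_equivalent_def
  by (auto intro!: r_into_rtranclp simp: local_step_def lab_cycle_nonsimple_local_compl)

lemma eliminate_closed_lbl:
  assumes G: "looped_simple_graph V A" and "u \<in> V" and "t u = closed_lbl A u"
  obtains B s where "cycle_equivalent V A t B s" and "s u = Phi"
    and "\<And>x. x \<noteq> u \<Longrightarrow> s x = Phi \<longleftrightarrow> t x = Phi"
proof
  show "cycle_equivalent V A t (simple_local_compl u A) (\<lambda>x. relabel_simple A u x (t x))"
    by (rule cycle_equivalent_simple_local_compl[OF G \<open>u \<in> V\<close>])
  show "relabel_simple A u u (t u) = Phi"
    using assms(3) by (simp add: relabel_simple_def pivot_lbl_def closed_lbl_def)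
  show "relabel_simple A u x (t x) = Phi \<longleftrightarrow> t x = Phi" if "x \<noteq> u" for x
    using that by (cases "t x") (auto simp: relabel_simple_def)
qed

text \<open>Local complementation at a neighbour w of u complements the loop at u, which turns the
  open label of u into its closed label.\<close>

lemma open_lbl_to_closed_lbl:
  assumes G: "looped_simple_graph V A" and tu: "t u = open_lbl A u" and uw: "adjacent A u w"
    and tw: "t w \<noteq> closed_lbl A w"
  obtains B s where "cycle_equivalent V A t B s" and "s u = closed_lbl B u" and "s w \<noteq> Phi"
    and "\<And>x. x \<noteq> w \<Longrightarrow> s x = t x"
proof
  have "w \<in> V" "w \<noteq> u" "adjacent A w u"
    using uw adjacent_in_vertices[OF G] adjacent_sym[OF G] by (auto simp: adjacent_def)
  then show "cycle_equivalent V A t (nonsimple_local_compl w A) (\<lambda>x. relabel_nonsimple A w x (t x))"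
    by (simp add: cycle_equivalent_nonsimple_local_compl[OF G])
  show "relabel_nonsimple A w u (t u) = closed_lbl (nonsimple_local_compl w A) u"
    using tu \<open>w \<noteq> u\<close> \<open>adjacent A w u\<close>
    by (simp add: relabel_nonsimple_def nonsimple_local_compl_def open_lbl_def closed_lbl_def)
  show "relabel_nonsimple A w w (t w) \<noteq> Phi"
    using tw by (cases "t w") (auto simp: relabel_nonsimple_def pivot_lbl_def closed_lbl_def
        split: if_splits)
  show "relabel_nonsimple A w x (t x) = t x" if "x \<noteq> w" for x
    using that by (simp add: relabel_nonsimple_def)
qed

lemma open_lbl_neighbour_closed_lbl:
  assumes G: "looped_simple_graph V A" and tu: "t u = open_lbl A u" and uw: "adjacent A u w"
    and tw: "t w = closed_lbl A w"
  obtains B s where "cycle_equivalent V A t B s" and "s u = open_lbl B u" and "adjacent B u w"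
    and "s w \<noteq> closed_lbl B w" and "\<And>x. x \<noteq> u \<Longrightarrow> s x = Phi \<longleftrightarrow> t x = Phi"
proof
  let ?B = "simple_local_compl u A"
  have loops: "?B x x = A x x" for x
    by (simp add: simple_local_compl_def)
  show "cycle_equivalent V A t ?B (\<lambda>x. relabel_simple A u x (t x))"
    using uw adjacent_in_vertices[OF G] by (simp add: cycle_equivalent_simple_local_compl[OF G])
  show "relabel_simple A u u (t u) = open_lbl ?B u"
    using tu by (simp add: relabel_simple_def pivot_lbl_def open_lbl_def loops)
  show "adjacent ?B u w"
    using uw by (simp add: simple_local_compl_def adjacent_def)
  show "relabel_simple A u w (t w) \<noteq> closed_lbl ?B w"
    using tw uw by (auto simp: relabel_simple_def closed_lbl_def loops adjacent_def)
  show "relabel_simple A u x (t x) = Phi \<longleftrightarrow> t x = Phi" if "x \<noteq> u" for x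
    using that by (cases "t x") (auto simp: relabel_simple_def)
qed

lemma eliminate_open_lbl:
  assumes G: "looped_simple_graph V A" and tu: "t u = open_lbl A u" and uw: "adjacent A u w"
  obtains B s where "cycle_equivalent V A t B s" and "s u = Phi" and "s w \<noteq> Phi"
    and "\<And>x. x \<noteq> u \<Longrightarrow> x \<noteq> w \<Longrightarrow> s x = Phi \<longleftrightarrow> t x = Phi"
proof -
  have "u \<in> V" "w \<noteq> u"
    using uw adjacent_in_vertices[OF G] by (auto simp: adjacent_def)
  obtain A1 t1 where eq1: "cycle_equivalent V A t A1 t1" and t1u: "t1 u = open_lbl A1 u"
    and uw1: "adjacent A1 u w" and t1w: "t1 w \<noteq> closed_lbl A1 w"
    and Phi1: "\<And>x. x \<noteq> u \<Longrightarrow> t1 x = Phi \<longleftrightarrow> t x = Phi"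
  proof (cases "t w = closed_lbl A w")
    case True
    then show ?thesis using open_lbl_neighbour_closed_lbl[where t = t, OF G tu uw] that by metis
  next
    case False
    then show ?thesis using that[OF cycle_equivalent_refl] tu uw by blast
  qed
  have G1: "looped_simple_graph V A1"
    using eq1 G locally_equivalent_looped_simple_graph by (auto simp: cycle_equivalent_def)
  obtain A2 t2 where eq2: "cycle_equivalent V A1 t1 A2 t2" and t2u: "t2 u = closed_lbl A2 u"
    and t2w: "t2 w \<noteq> Phi" and same2: "\<And>x. x \<noteq> w \<Longrightarrow> t2 x = t1 x"
    using open_lbl_to_closed_lbl[where t = t1, OF G1 t1u uw1 t1w] by blast
  have G2: "looped_simple_graph V A2"
    using eq2 G1 locally_equivalent_looped_simple_graph by (auto simp: cycle_equivalent_def)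
  obtain A3 t3 where eq3: "cycle_equivalent V A2 t2 A3 t3" and t3u: "t3 u = Phi"
    and Phi3: "\<And>x. x \<noteq> u \<Longrightarrow> t3 x = Phi \<longleftrightarrow> t2 x = Phi"
    using eliminate_closed_lbl[where t = t2, OF G2 \<open>u \<in> V\<close> t2u] by blast
  show thesis
  proof (rule that)
    show "cycle_equivalent V A t A3 t3"
      using eq1 eq2 eq3 by (blast intro: cycle_equivalent_trans)
    show "t3 u = Phi" "t3 w \<noteq> Phi"
      using t3u t2w Phi3 \<open>w \<noteq> u\<close> by auto
    show "t3 x = Phi \<longleftrightarrow> t x = Phi" if "x \<noteq> u" "x \<noteq> w" for x
      using that Phi1 same2 Phi3 by simp
  qed
qed

lemma open_lbl_closed_nbhd_cycle:
  assumes G: "looped_simple_graph V A" and tu: "t u = open_lbl A u"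
    and Phi: "\<And>x. adjacent A u x \<Longrightarrow> t x = Phi"
  shows "lab_cycle V A t (closed_nbhd A u)"
  unfolding lab_cycle_def
proof
  fix r
  have "(\<Sum>y\<in>closed_nbhd A u. ias_col A (y, t y) r)
          = of_bool (r \<in> closed_nbhd A u - {u}) + (\<Sum>y\<in>closed_nbhd A u \<inter> {u}. ias_col A (y, t y) r)"
    using Phi by (intro sum_ias_col_Phi_outside finite_closed_nbhd[OF G]) (auto simp: closed_nbhd_def)
  also have "\<dots> = of_bool (adjacent A u r) + ias_col A (u, t u) r"
    by (simp add: closed_nbhd_def adjacent_def Int_absorb1)
  also have "\<dots> = 0"
    using tu by (simp add: ias_col_open_lbl[OF G])
  finally show "(\<Sum>y\<in>closed_nbhd A u. ias_col A (y, t y) r) = 0" .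
qed

text \<open>A vertex with open label whose neighbours are all settled would span a cycle inside
  X1 \<union> X2 avoiding v1 and v2, hence a circuit other than X1 and X2.\<close>

lemma isolated_circuit_pair_unsettled_neighbour:
  assumes G: "looped_simple_graph V A" and P: "isolated_circuit_pair V A t k1 k2 X1 X2"
    and v: "v1 \<in> X1" "v2 \<in> X2" and u: "u \<in> X1 \<union> X2 - {v1, v2}" and tu: "t u = open_lbl A u"
  obtains w where "adjacent A u w" and "\<not> (w \<in> X1 \<union> X2 - {v1, v2} \<and> t w = Phi)"
proof (rule ccontr)
  assume "\<not> thesis"
  with that have settled: "\<And>w. adjacent A u w \<Longrightarrow> w \<in> X1 \<union> X2 - {v1, v2} \<and> t w = Phi"
    by metis
  have "u \<in> V"
    using u isolated_circuit_pair_subset[OF P] by blast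
  have inside: "closed_nbhd A u \<subseteq> X1 \<union> X2 - {v1, v2}"
    using u settled by (auto simp: closed_nbhd_def)
  have "lab_dependent V A t (closed_nbhd A u)"
    using open_lbl_closed_nbhd_cycle[where t = t, OF G tu] settled
    unfolding lab_dependent_def by (auto simp: closed_nbhd_def)
  then obtain C where "C \<subseteq> closed_nbhd A u" and "lab_circuit V A t C"
    using lab_dependent_has_circuit[OF finite_closed_nbhd[OF G] closed_nbhd_subset[OF G \<open>u \<in> V\<close>]]
    by blast
  with P inside have "C = X1 \<or> C = X2" and "C \<subseteq> X1 \<union> X2 - {v1, v2}"
    unfolding isolated_circuit_pair_def by blast+
  with v show False by blast
qed

lemma settle_vertex:
  assumes G: "looped_simple_graph V A" and P: "isolated_circuit_pair V A t k1 k2 X1 X2"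
    and v: "v1 \<in> X1" "v2 \<in> X2" "t v1 \<noteq> Phi" "t v2 \<noteq> Phi"
    and u: "u \<in> X1 \<union> X2 - {v1, v2}" "t u \<noteq> Phi"
  obtains B s where "cycle_equivalent V A t B s" and "s v1 \<noteq> Phi" and "s v2 \<noteq> Phi"
    and "{x \<in> X1 \<union> X2 - {v1, v2}. s x \<noteq> Phi} \<subset> {x \<in> X1 \<union> X2 - {v1, v2}. t x \<noteq> Phi}"
proof -
  let ?R = "X1 \<union> X2 - {v1, v2}"
  have "u \<in> V"
    using u isolated_circuit_pair_subset[OF P] by blast
  have "\<exists>B s. cycle_equivalent V A t B s \<and> s u = Phi \<and> s v1 \<noteq> Phi \<and> s v2 \<noteq> Phi \<and>
          (\<forall>x\<in>?R. t x = Phi \<longrightarrow> s x = Phi)"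
  proof (cases "t u = open_lbl A u")
    case False
    then have "t u = closed_lbl A u"
      using lbl_cases_open_closed[of "t u" A u] u(2) by blast
    then obtain B s where "cycle_equivalent V A t B s" "s u = Phi"
      and keep: "\<And>x. x \<noteq> u \<Longrightarrow> s x = Phi \<longleftrightarrow> t x = Phi"
      using eliminate_closed_lbl[OF G \<open>u \<in> V\<close>] by blast
    moreover have "s x = Phi" if "t x = Phi" for x
      using keep[of x] that u(2) by (cases "x = u") auto
    moreover have "s v1 \<noteq> Phi" "s v2 \<noteq> Phi"
      using keep v(3,4) u(1) by auto
    ultimately show ?thesis by blast
  next
    case True
    obtain w where "adjacent A u w" and w: "\<not> (w \<in> ?R \<and> t w = Phi)"
      using isolated_circuit_pair_unsettled_neighbour[OF G P v(1,2) u(1) True] by blast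
    then obtain B s where "cycle_equivalent V A t B s" "s u = Phi" "s w \<noteq> Phi"
      and keep: "\<And>x. x \<noteq> u \<Longrightarrow> x \<noteq> w \<Longrightarrow> s x = Phi \<longleftrightarrow> t x = Phi"
      using eliminate_open_lbl[where t = t, OF G True] by blast
    moreover have "s x = Phi" if "x \<in> ?R" "t x = Phi" for x
      using keep[of x] that u(2) w by (cases "x = u"; cases "x = w") auto
    moreover have "s x \<noteq> Phi" if "x \<in> {v1, v2}" for x
      using keep[of x] that u(1) v(3,4) \<open>s w \<noteq> Phi\<close> by (cases "x = w") auto
    ultimately show ?thesis by blast
  qed
  then obtain B s where eq: "cycle_equivalent V A t B s" and s: "s v1 \<noteq> Phi" "s v2 \<noteq> Phi"
    and "s u = Phi" "\<forall>x\<in>?R. t x = Phi \<longrightarrow> s x = Phi"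
    by blast
  with u have "{x \<in> ?R. s x \<noteq> Phi} \<subset> {x \<in> ?R. t x \<noteq> Phi}"
    by blast
  with eq s show thesis by (rule that)
qed

lemma isolated_circuit_pair_imp_separated_stars:
  assumes "looped_simple_graph V A" and "isolated_circuit_pair V A t k1 k2 X1 X2"
    and "v1 \<in> X1" "v2 \<in> X2" "t v1 \<noteq> Phi" "t v2 \<noteq> Phi"
  shows "\<exists>B. locally_equivalent V A B \<and> has_separated_stars V B k1 k2"
  using assms
proof (induction "card {x \<in> X1 \<union> X2 - {v1, v2}. t x \<noteq> Phi}" arbitrary: A t rule: less_induct)
  case less
  let ?U = "\<lambda>t. {x \<in> X1 \<union> X2 - {v1, v2}. t x \<noteq> Phi}"
  show ?case
  proof (cases "?U t = {}")
    case True
    then have "has_separated_stars V A k1 k2"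
      using settled_isolated_circuit_pair_imp_separated_stars[OF less.prems] by blast
    then show ?thesis
      by (auto simp: locally_equivalent_def)
  next
    case False
    then obtain u where "u \<in> X1 \<union> X2 - {v1, v2}" "t u \<noteq> Phi" by blast
    then obtain B s where eq: "cycle_equivalent V A t B s" and s: "s v1 \<noteq> Phi" "s v2 \<noteq> Phi"
      and smaller: "?U s \<subset> ?U t"
      using settle_vertex[OF less.prems] by blast
    have "finite (?U t)"
      using isolated_circuit_pair_subset[OF less.prems(2)] less.prems(1) finite_subset
      by (fastforce simp: looped_simple_graph_def)
    with smaller have "card (?U s) < card (?U t)"
      by (rule psubset_card_mono[rotated])
    moreover have "looped_simple_graph V B"
      using eq less.prems(1) locally_equivalent_looped_simple_graph
      by (auto simp: cycle_equivalent_def)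
    moreover have "isolated_circuit_pair V B s k1 k2 X1 X2"
      using eq less.prems(2) isolated_circuit_pair_cong[of V B s A t]
      by (simp add: cycle_equivalent_def)
    ultimately obtain C where "locally_equivalent V B C" "has_separated_stars V C k1 k2"
      using less.hyps less.prems(3,4) s by blast
    with eq show ?thesis
      by (auto simp: cycle_equivalent_def intro: locally_equivalent_trans)
  qed
qed

theorem corollary6p1:
  fixes V :: "'a set" and A :: "'a \<Rightarrow> 'a \<Rightarrow> bool" and k1 k2 :: nat
  assumes "looped_simple_graph V A" and "k1 > 0" and "k2 > 0"
  shows "(\<exists>B. locally_equivalent V A B \<and>
            (\<exists>v\<in>V. \<exists>w\<in>V. v \<noteq> w \<and> \<not> adjacent B v w \<and>
               degree B v = k1 - 1 \<and> degree B w = k2 - 1 \<and>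
               \<not> (\<exists>u. adjacent B v u \<and> adjacent B w u)))
     \<longleftrightarrow>
     (\<exists>T. transversal V T \<and>
        (\<exists>C1 C2. transverse_circuit V A T C1 \<and> transverse_circuit V A T C2 \<and>
           C1 \<inter> C2 = {} \<and> card C1 = k1 \<and> card C2 = k2 \<and>
           (\<forall>C. transverse_circuit V A T C \<and> C \<subseteq> C1 \<union> C2 \<longrightarrow> C = C1 \<or> C = C2)))"
  unfolding transverse_circuit_pair_iff has_separated_stars_def[symmetric]
proof
  assume "\<exists>B. locally_equivalent V A B \<and> has_separated_stars V B k1 k2"
  then obtain B where B: "locally_equivalent V A B" "has_separated_stars V B k1 k2" by blast
  then have "looped_simple_graph V B"
    using assms(1) locally_equivalent_looped_simple_graph by blast
  then have "\<exists>t X1 X2. isolated_circuit_pair V B t k1 k2 X1 X2"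
    using separated_stars_imp_isolated_circuit_pair assms(2,3) B(2) by blast
  then show "\<exists>t X1 X2. isolated_circuit_pair V A t k1 k2 X1 X2"
    using locally_equivalent_isolated_circuit_pair[OF B(1) assms(1)] by blast
next
  assume "\<exists>t X1 X2. isolated_circuit_pair V A t k1 k2 X1 X2"
  then obtain t X1 X2 where P: "isolated_circuit_pair V A t k1 k2 X1 X2" by blast
  have "finite V" using assms(1) by (simp add: looped_simple_graph_def)
  from P have "lab_circuit V A t X1" "lab_circuit V A t X2"
    unfolding isolated_circuit_pair_def by simp_all
  then obtain v1 v2 where "v1 \<in> X1" "t v1 \<noteq> Phi" "v2 \<in> X2" "t v2 \<noteq> Phi"
    using lab_circuit_has_non_Phi[OF \<open>finite V\<close>] by meson
  then show "\<exists>B. locally_equivalent V A B \<and> has_separated_stars V B k1 k2"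
    using isolated_circuit_pair_imp_separated_stars[OF assms(1) P] by blast
qed

end
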